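(* Let $R$ be a finite chain ring, let $A\subseteq R$ be a well-conditioned set of size $n$, partitioned as $A=\bigcup_{i=1}^lA_i$ into nonempty blocks, and let $h_A(x)=\prod_{a\in A}(x-a)$. Let $$\mathcal F_A=\{f\in R[x]:\ \deg f<|A|,\ f \text{ is constant on } A_i \text{ for every } i\},$$ an $R$-algebra with the usual addition and multiplication modulo $h_A$. Then: (1) If $f\in\mathcal F_A$ is not a constant polynomial, then $\max_i|A_i|\le\deg f<|A|$. (2) $\mathcal F_A$ is a free $R$-module of rank $l$, with basis $f_1,\dots,f_l$ where $$f_i(x)=\sum_{a\in A_i}\prod_{b\in A\setminus\{a\}}\frac{x-b}{a-b},$$ which satisfy $f_i(A_j)=\delta_{i,j}$. (3) If $\{c_1,\dots,c_l\}\subseteq R$ is a well-conditioned set of $l$ distinct elements and $g$ is the unique polynomial of degree $<|A|$ with $g(A_i)=c_i$ for all $i$, then $1,g,g^2,\dots,g^{l-1}$ (powers computed in $\mathcal F_A$, i.e. modulo $h_A$) form a basis of $\mathcal F_A$ as an $R$-module.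
   Context: A finite chain ring is a finite commutative local ring whose ideals are totally ordered by inclusion; $N(R)$ is its unit group. A subset $T\subseteq N(R)$ is subtractive if $a-b\in N(R)$ for all distinct $a,b\in T$. A set $\{a_1,\dots,a_n\}\subseteq R$ is well-conditioned if either it is a subtractive subset of $N(R)$, or for some $i$ the set without $a_i$ is a subtractive subset of $N(R)$ and $a_i$ is a zero divisor (or $0$). For a block $A_i$ and $f$ constant on it, $f(A_i)$ denotes that constant value. *)

theory Defs
  imports "HOL-Computational_Algebra.Polynomial"
begin

definition ring_ideal :: "'a::comm_ring_1 set \<Rightarrow> bool" where
  "ring_ideal I \<longleftrightarrow> 0 \<in> I \<and> (\<forall>x\<in>I. \<forall>y\<in>I. x + y \<in> I) \<and> (\<forall>r. \<forall>x\<in>I. r * x \<in> I)"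

definition local_ring :: "'a::comm_ring_1 itself \<Rightarrow> bool" where
  "local_ring _ \<longleftrightarrow> (0::'a) \<noteq> 1 \<and> ring_ideal {x::'a. \<not> x dvd 1}"

definition finite_chain_ring :: "'a::comm_ring_1 itself \<Rightarrow> bool" where
  "finite_chain_ring T \<longleftrightarrow> finite (UNIV :: 'a set) \<and> local_ring T \<and>
     (\<forall>I J :: 'a set. ring_ideal I \<longrightarrow> ring_ideal J \<longrightarrow> I \<subseteq> J \<or> J \<subseteq> I)"

definition subtractive :: "'a::comm_ring_1 set \<Rightarrow> bool" where
  "subtractive T \<longleftrightarrow> (\<forall>a\<in>T. a dvd 1) \<and> (\<forall>a\<in>T. \<forall>b\<in>T. a \<noteq> b \<longrightarrow> (a - b) dvd 1)"

definition zero_divisor :: "'a::comm_ring_1 \<Rightarrow> bool" where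
  "zero_divisor a \<longleftrightarrow> (\<exists>b. b \<noteq> 0 \<and> a * b = 0)"

definition well_conditioned :: "'a::comm_ring_1 set \<Rightarrow> bool" where
  "well_conditioned A \<longleftrightarrow> subtractive A \<or>
     (\<exists>a\<in>A. subtractive (A - {a}) \<and> (zero_divisor a \<or> a = 0))"

definition unit_inv :: "'a::comm_ring_1 \<Rightarrow> 'a" where
  "unit_inv x = (SOME y. x * y = 1)"

text \<open>The paper's convention deg 0 = -infinity: "deg f < n" is rendered as f = 0 or degree f < n.\<close>
definition deg_less :: "'a::zero poly \<Rightarrow> nat \<Rightarrow> bool" where
  "deg_less f n \<longleftrightarrow> f = 0 \<or> degree f < n"

definition h_poly :: "'a::comm_ring_1 set \<Rightarrow> 'a poly" where
  "h_poly A = (\<Prod>a\<in>A. [:-a, 1:])"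

definition mod_monic :: "'a::comm_ring_1 poly \<Rightarrow> 'a poly \<Rightarrow> 'a poly" where
  "mod_monic p h = (THE r. deg_less r (degree h) \<and> (\<exists>q. p = q * h + r))"

definition F_alg :: "'a::comm_ring_1 set \<Rightarrow> (nat \<Rightarrow> 'a set) \<Rightarrow> nat \<Rightarrow> 'a poly set" where
  "F_alg A B l = {f. deg_less f (card A) \<and>
      (\<forall>i<l. \<forall>a\<in>B i. \<forall>b\<in>B i. poly f a = poly f b)}"

definition is_partition :: "'a set \<Rightarrow> (nat \<Rightarrow> 'a set) \<Rightarrow> nat \<Rightarrow> bool" where
  "is_partition A B l \<longleftrightarrow> (\<forall>i<l. B i \<noteq> {}) \<and>
     (\<forall>i<l. \<forall>j<l. i \<noteq> j \<longrightarrow> B i \<inter> B j = {}) \<and> (\<Union>i<l. B i) = A"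

definition is_basis :: "'a::comm_ring_1 poly set \<Rightarrow> (nat \<Rightarrow> 'a poly) \<Rightarrow> nat \<Rightarrow> bool" where
  "is_basis F fs l \<longleftrightarrow>
     F = {(\<Sum>i<l. smult (c i) (fs i)) | c. True} \<and>
     (\<forall>c. (\<Sum>i<l. smult (c i) (fs i)) = 0 \<longrightarrow> (\<forall>i<l. c i = 0))"

definition lagrange_block :: "'a::comm_ring_1 set \<Rightarrow> 'a set \<Rightarrow> 'a poly" where
  "lagrange_block A Ai = (\<Sum>a\<in>Ai. \<Prod>b\<in>A - {a}. smult (unit_inv (a - b)) [:-b, 1:])"

end

theory Submission
  imports Defs
begin

text \<open>
  Since A is well-conditioned in a local ring, all differences of distinct elements of A are
  units. A polynomial of degree less than |A| vanishing on A is therefore divisible by the monic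
  polynomial h_A of degree |A|, hence zero: polynomials of degree < |A| are determined by their
  values on A, and Lagrange interpolation at the points of A is available. Consequently F_A is
  identified with R^l via the block values f(A_i). The f_i map to the standard basis; the powers
  of g map to the rows of the Vandermonde matrix of the c_i, which is invertible because the
  c_i are again nodes with unit differences. Finally a non-constant f in F_A is a constant plus a
  nonzero multiple of h_(A_i) for every block A_i, giving deg f \<ge> |A_i|.
\<close>

definition unit_differences :: "'a::comm_ring_1 set \<Rightarrow> bool" where
  "unit_differences S \<longleftrightarrow> (\<forall>a\<in>S. \<forall>b\<in>S. a \<noteq> b \<longrightarrow> (a - b) dvd 1)"

lemma unit_differences_subset: "unit_differences S \<Longrightarrow> T \<subseteq> S \<Longrightarrow> unit_differences T"
  unfolding unit_differences_def by blast

subsection \<open>Well-conditioned sets in local rings\<close>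

lemma local_ring_unit_diff_nonunit:
  fixes u v :: "'a::comm_ring_1"
  assumes L: "local_ring TYPE('a)" and u: "u dvd 1" and v: "\<not> v dvd 1"
  shows "(u - v) dvd 1"
proof (rule ccontr)
  assume "\<not> (u - v) dvd 1"
  moreover have "ring_ideal {x::'a. \<not> x dvd 1}" using L unfolding local_ring_def by blast
  ultimately have "\<not> ((u - v) + v) dvd 1" using v unfolding ring_ideal_def by blast
  then show False using u by simp
qed

lemma unit_mult_eq_0_iff:
  fixes a b :: "'a::comm_ring_1"
  assumes "a dvd 1"
  shows "a * b = 0 \<longleftrightarrow> b = 0"
proof
  assume ab: "a * b = 0"
  obtain k where k: "1 = a * k" using assms by (rule dvdE)
  have "b = (a * k) * b" by (simp flip: k)
  also have "\<dots> = k * (a * b)" by (simp only: ac_simps)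
  finally show "b = 0" using ab by simp
qed simp

lemma zero_divisor_not_unit: "zero_divisor (a::'a::comm_ring_1) \<Longrightarrow> \<not> a dvd 1"
  unfolding zero_divisor_def by (auto simp: unit_mult_eq_0_iff)

lemma well_conditioned_unit_differences:
  fixes S :: "'a::comm_ring_1 set"
  assumes L: "local_ring TYPE('a)" and wc: "well_conditioned S"
  shows "unit_differences S"
  using wc unfolding well_conditioned_def
proof
  assume "subtractive S"
  then show ?thesis unfolding subtractive_def unit_differences_def by blast
next
  assume "\<exists>a\<in>S. subtractive (S - {a}) \<and> (zero_divisor a \<or> a = 0)"
  then obtain a where a: "a \<in> S" "subtractive (S - {a})" and na: "\<not> a dvd 1"
    using zero_divisor_not_unit by fastforce
  have unit_a: "(x - a) dvd 1 \<and> (a - x) dvd 1" if "x \<in> S - {a}" for x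
  proof -
    have "x dvd 1" using a(2) that unfolding subtractive_def by blast
    then have "(x - a) dvd 1" using local_ring_unit_diff_nonunit[OF L _ na] by blast
    moreover have "a - x = - (x - a)" by simp
    ultimately show ?thesis by (simp only: minus_dvd_iff)
  qed
  show ?thesis unfolding unit_differences_def
  proof (intro ballI impI)
    fix x y assume "x \<in> S" "y \<in> S" "x \<noteq> y"
    then consider "x = a" "y \<in> S - {a}" | "y = a" "x \<in> S - {a}" | "x \<in> S - {a}" "y \<in> S - {a}"
      by blast
    then show "(x - y) dvd 1"
      using unit_a a(2) \<open>x \<noteq> y\<close> unfolding subtractive_def by cases blast+
  qed
qed

subsection \<open>Polynomials vanishing on a set with unit differences\<close>

lemma deg_less_iff_coeff: "deg_less p n \<longleftrightarrow> (\<forall>k\<ge>n. coeff p k = 0)"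
proof
  assume "\<forall>k\<ge>n. coeff p k = 0"
  then have "p \<noteq> 0 \<Longrightarrow> \<not> n \<le> degree p" by auto
  then show "deg_less p n" unfolding deg_less_def using not_le by blast
qed (auto simp: deg_less_def coeff_eq_0)

lemma deg_less_diff: "deg_less f n \<Longrightarrow> deg_less g n \<Longrightarrow> deg_less (f - g) n"
  by (simp add: deg_less_iff_coeff)

lemma deg_less_smult: "deg_less p n \<Longrightarrow> deg_less (smult c p) n"
  by (simp add: deg_less_iff_coeff)

lemma deg_less_sum: "(\<And>i. i \<in> I \<Longrightarrow> deg_less (f i) n) \<Longrightarrow> deg_less (sum f I) n"
  by (simp add: deg_less_iff_coeff coeff_sum)

lemma poly_eq_sum_coeff_lessThan:
  fixes p :: "'a::comm_semiring_1 poly"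
  assumes "deg_less p n"
  shows "poly p x = (\<Sum>k<n. coeff p k * x ^ k)"
proof -
  have "poly p x = (\<Sum>k\<le>degree p. coeff p k * x ^ k)" by (rule poly_altdef)
  also have "\<dots> = (\<Sum>k<n. coeff p k * x ^ k)"
    using assms unfolding deg_less_def
    by (cases "p = 0") (auto intro!: sum.mono_neutral_left le_degree simp: coeff_eq_0)
  finally show ?thesis .
qed

lemma monic_mult:
  fixes p q :: "'a::comm_ring_1 poly"
  assumes p: "lead_coeff p = 1" and q: "q \<noteq> 0"
  shows "degree (p * q) = degree p + degree q" and "lead_coeff (p * q) = lead_coeff q"
proof -
  have c: "coeff (p * q) (degree p + degree q) = lead_coeff q"
    using p by (simp add: coeff_mult_degree_sum)
  then have "degree p + degree q \<le> degree (p * q)" using q by (intro le_degree) simp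
  with degree_mult_le show deg: "degree (p * q) = degree p + degree q" by (rule antisym)
  show "lead_coeff (p * q) = lead_coeff q" using c by (simp only: deg)
qed

lemma h_poly_insert: "finite S \<Longrightarrow> x \<notin> S \<Longrightarrow> h_poly (insert x S) = [:-x, 1:] * h_poly S"
  by (simp add: h_poly_def)

lemma lead_coeff_h_poly: "finite S \<Longrightarrow> lead_coeff (h_poly S) = 1"
  and degree_h_poly: "finite S \<Longrightarrow> degree (h_poly S) = card S"
proof (induction S rule: finite_induct)
  case (insert x S)
  have "h_poly S \<noteq> 0" using insert.IH(1) by auto
  then show "lead_coeff (h_poly (insert x S)) = 1" "degree (h_poly (insert x S)) = card (insert x S)"
    using monic_mult[of "[:-x, 1:]" "h_poly S"] insert by (simp_all add: h_poly_insert)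
qed (simp_all add: h_poly_def)

lemma degree_h_poly_mult:
  "finite S \<Longrightarrow> q \<noteq> 0 \<Longrightarrow> degree (h_poly S * q) = card S + degree q"
  by (simp add: monic_mult(1)[OF lead_coeff_h_poly] degree_h_poly)

lemma h_poly_dvd_if_roots:
  fixes p :: "'a::comm_ring_1 poly"
  assumes "finite S" "unit_differences S" "\<forall>s\<in>S. poly p s = 0"
  shows "h_poly S dvd p"
  using assms
proof (induction S arbitrary: p rule: finite_induct)
  case empty
  then show ?case by (simp add: h_poly_def)
next
  case (insert x S)
  from insert.prems obtain q where q: "p = [:-x, 1:] * q"
    by (auto simp: poly_eq_0_iff_dvd elim: dvdE)
  have "poly q s = 0" if s: "s \<in> S" for s
  proof -
    have "(s - x) dvd 1" using insert s unfolding unit_differences_def by auto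
    moreover have "(s - x) * poly q s = 0" using insert.prems s q by (simp add: algebra_simps)
    ultimately show ?thesis by (simp add: unit_mult_eq_0_iff)
  qed
  then have "h_poly S dvd q"
    using insert.IH insert.prems(1) unit_differences_subset by blast
  then have "[:-x, 1:] * h_poly S dvd [:-x, 1:] * q" by (rule mult_dvd_mono[OF dvd_refl])
  then show ?case by (simp only: h_poly_insert[OF insert.hyps] q)
qed

lemma poly_eq_0_if_roots:
  fixes p :: "'a::comm_ring_1 poly"
  assumes S: "finite S" "unit_differences S"
    and roots: "\<forall>s\<in>S. poly p s = 0" and deg: "deg_less p (card S)"
  shows "p = 0"
proof (rule ccontr)
  assume "p \<noteq> 0"
  obtain q where "p = h_poly S * q"
    using h_poly_dvd_if_roots[OF S roots] by (elim dvdE)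
  moreover from this \<open>p \<noteq> 0\<close> have "q \<noteq> 0" by auto
  ultimately have "degree p = card S + degree q" using S by (auto simp: degree_h_poly_mult)
  with \<open>p \<noteq> 0\<close> deg show False unfolding deg_less_def by simp
qed

lemma poly_eqI_unit_differences:
  fixes f g :: "'a::comm_ring_1 poly"
  assumes "finite A" "unit_differences A" "deg_less f (card A)" "deg_less g (card A)"
    and "\<forall>a\<in>A. poly f a = poly g a"
  shows "f = g"
  using poly_eq_0_if_roots[of A "f - g"] assms by (simp add: deg_less_diff)

subsection \<open>Lagrange interpolation\<close>

lemma unit_inv_right: "(x::'a::comm_ring_1) dvd 1 \<Longrightarrow> x * unit_inv x = 1"
  unfolding unit_inv_def by (rule someI_ex) (auto elim!: dvdE intro: sym)

lemma poly_linear_eq: "poly [:-b, 1:] x = x - (b::'a::comm_ring_1)"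
  by simp

lemma poly_lagrange_block:
  fixes A :: "'a::comm_ring_1 set"
  assumes fin: "finite A" and ud: "unit_differences A" and sub: "Ai \<subseteq> A" and x: "x \<in> A"
  shows "poly (lagrange_block A Ai) x = (if x \<in> Ai then 1 else 0)"
proof -
  have "(\<Prod>b\<in>A - {a}. unit_inv (a - b) * (x - b)) = (if a = x then 1 else 0)"
    if a: "a \<in> Ai" for a
  proof (cases "a = x")
    case True
    have "unit_inv (a - b) * (x - b) = 1" if "b \<in> A - {a}" for b
      using unit_inv_right[of "a - b"] ud a sub that True
      unfolding unit_differences_def by (auto simp: mult.commute)
    then show ?thesis using True by simp
  next
    case False
    then show ?thesis using fin x by (auto intro!: prod_zero bexI[where x = x])
  qed
  then have "poly (lagrange_block A Ai) x = (\<Sum>a\<in>Ai. if a = x then 1 else 0)"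
    by (simp only: lagrange_block_def poly_sum poly_prod poly_smult poly_linear_eq cong: sum.cong)
  also have "\<dots> = (if x \<in> Ai then 1 else 0)"
    using finite_subset[OF sub fin] by (simp add: sum.delta')
  finally show ?thesis .
qed

lemma deg_less_lagrange_block:
  fixes A :: "'a::comm_ring_1 set"
  assumes fin: "finite A" and sub: "Ai \<subseteq> A"
  shows "deg_less (lagrange_block A Ai) (card A)"
  unfolding lagrange_block_def
proof (rule deg_less_sum)
  fix a assume a: "a \<in> Ai"
  have "degree (\<Prod>b\<in>A - {a}. smult (unit_inv (a - b)) [:-b, 1:])
      \<le> (\<Sum>b\<in>A - {a}. degree (smult (unit_inv (a - b)) [:-b, 1:]))"
    using degree_prod_sum_le[OF finite_Diff[OF fin]] by (simp only: o_def)
  also have "\<dots> \<le> (\<Sum>b\<in>A - {a}. 1)"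
    by (rule sum_mono) (rule order_trans[OF degree_smult_le], simp)
  also have "\<dots> < card A" using a sub fin card_Diff1_less[of A a] by auto
  finally show "deg_less (\<Prod>b\<in>A - {a}. smult (unit_inv (a - b)) [:-b, 1:]) (card A)"
    unfolding deg_less_def by blast
qed

lemma lagrange_interpolation:
  fixes C :: "'a::comm_ring_1 set" and v :: "'a \<Rightarrow> 'a"
  assumes fin: "finite C" and ud: "unit_differences C"
  obtains Q where "deg_less Q (card C)" and "\<forall>c\<in>C. poly Q c = v c"
proof
  let ?Q = "\<Sum>a\<in>C. smult (v a) (lagrange_block C {a})"
  show "deg_less ?Q (card C)"
    using fin by (intro deg_less_sum deg_less_smult deg_less_lagrange_block) auto
  have "poly ?Q c = (\<Sum>a\<in>C. if a = c then v a else 0)" if c: "c \<in> C" for c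
    using poly_lagrange_block[OF fin ud _ c] by (auto simp: poly_sum intro!: sum.cong)
  then show "\<forall>c\<in>C. poly ?Q c = v c" using fin by (simp add: sum.delta')
qed

lemma mod_monic_h_poly:
  fixes A :: "'a::comm_ring_1 set"
  assumes fin: "finite A" and ud: "unit_differences A"
  shows "deg_less (mod_monic p (h_poly A)) (card A)"
    and "\<forall>a\<in>A. poly (mod_monic p (h_poly A)) a = poly p a"
proof -
  obtain r where r: "deg_less r (card A)" "\<forall>a\<in>A. poly r a = poly p a"
    using lagrange_interpolation[OF fin ud] by blast
  have h_zero: "poly (h_poly A) a = 0" if "a \<in> A" for a
    using fin that unfolding h_poly_def poly_prod by (auto intro!: prod_zero bexI[where x = a])
  have "h_poly A dvd p - r" using r(2) by (intro h_poly_dvd_if_roots[OF fin ud]) simp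
  then obtain q where "p = q * h_poly A + r" by (auto elim!: dvdE simp: algebra_simps)
  then have ex: "deg_less r (degree (h_poly A)) \<and> (\<exists>q. p = q * h_poly A + r)"
    using r(1) fin by (auto simp: degree_h_poly)
  have uniq: "r' = r" if "deg_less r' (degree (h_poly A)) \<and> (\<exists>q. p = q * h_poly A + r')" for r'
  proof (rule poly_eqI_unit_differences[OF fin ud _ r(1)])
    show "deg_less r' (card A)" using that fin by (simp add: degree_h_poly)
    show "\<forall>a\<in>A. poly r' a = poly r a" using that r(2) h_zero by auto
  qed
  have "mod_monic p (h_poly A) = r"
    unfolding mod_monic_def using ex uniq by (rule the_equality)
  then show "deg_less (mod_monic p (h_poly A)) (card A)"
    and "\<forall>a\<in>A. poly (mod_monic p (h_poly A)) a = poly p a" using r by simp_all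
qed

lemma vandermonde_solvable:
  fixes c :: "nat \<Rightarrow> 'a::comm_ring_1"
  assumes inj: "inj_on c {..<l}" and ud: "unit_differences (c ` {..<l})"
  obtains d where "\<forall>i<l. (\<Sum>k<l. d k * c i ^ k) = v i"
proof -
  obtain Q where Q: "deg_less Q (card (c ` {..<l}))"
      "\<forall>x\<in>c ` {..<l}. poly Q x = v (the_inv_into {..<l} c x)"
    by (rule lagrange_interpolation[OF finite_imageI[OF finite_lessThan] ud])
  have deg: "deg_less Q l" using Q(1) card_image[OF inj] by simp
  have "(\<Sum>k<l. coeff Q k * c i ^ k) = v i" if i: "i < l" for i
  proof -
    have "(\<Sum>k<l. coeff Q k * c i ^ k) = poly Q (c i)"
      by (rule poly_eq_sum_coeff_lessThan[OF deg, symmetric])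
    also have "\<dots> = v i" using Q(2) i the_inv_into_f_f[OF inj] by simp
    finally show ?thesis .
  qed
  then show ?thesis using that by blast
qed

lemma vandermonde_kernel:
  fixes c d :: "nat \<Rightarrow> 'a::comm_ring_1"
  assumes inj: "inj_on c {..<l}" and ud: "unit_differences (c ` {..<l})"
    and zero: "\<forall>i<l. (\<Sum>k<l. d k * c i ^ k) = 0" and k: "k < l"
  shows "d k = 0"
proof -
  define D where "D = (\<Sum>k<l. monom (d k) k)"
  have coeff_D: "coeff D j = (if j < l then d j else 0)" for j
    unfolding D_def coeff_sum coeff_monom by (simp add: sum.delta)
  have "D = 0"
  proof (rule poly_eq_0_if_roots[OF _ ud])
    show "\<forall>s\<in>c ` {..<l}. poly D s = 0" using zero by (auto simp: D_def poly_sum poly_monom)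
    show "deg_less D (card (c ` {..<l}))"
      using card_image[OF inj] by (simp add: deg_less_iff_coeff coeff_D)
  qed simp
  then show ?thesis using coeff_D[of k] k by simp
qed

subsection \<open>The algebra F_A\<close>

lemma is_partition_subset: "is_partition A B l \<Longrightarrow> i < l \<Longrightarrow> B i \<subseteq> A"
  unfolding is_partition_def by blast

lemma is_partition_cover: "is_partition A B l \<Longrightarrow> x \<in> A \<Longrightarrow> \<exists>i<l. x \<in> B i"
  unfolding is_partition_def by blast

lemma is_partition_nonempty: "is_partition A B l \<Longrightarrow> i < l \<Longrightarrow> \<exists>a. a \<in> B i"
  unfolding is_partition_def by blast

lemma is_partition_block_eq:
  "is_partition A B l \<Longrightarrow> i < l \<Longrightarrow> j < l \<Longrightarrow> x \<in> B j \<Longrightarrow> x \<in> B i \<longleftrightarrow> i = j"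
  unfolding is_partition_def by blast

lemma F_alg_block_values:
  assumes "f \<in> F_alg A B l"
  obtains v where "\<forall>i<l. \<forall>a\<in>B i. poly f a = v i"
proof
  show "\<forall>i<l. \<forall>a\<in>B i. poly f a = poly f (SOME a. a \<in> B i)"
  proof (intro allI impI ballI)
    fix i a assume "i < l" "a \<in> B i"
    moreover from \<open>a \<in> B i\<close> have "(SOME a. a \<in> B i) \<in> B i" by (rule someI)
    ultimately show "poly f a = poly f (SOME a. a \<in> B i)"
      using assms unfolding F_alg_def by blast
  qed
qed

lemma poly_lagrange_block_partition:
  fixes A :: "'a::comm_ring_1 set"
  assumes fin: "finite A" and ud: "unit_differences A" and P: "is_partition A B l"
    and ij: "i < l" "j < l" and x: "x \<in> B j"
  shows "poly (lagrange_block A (B i)) x = (if i = j then 1 else 0)"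
proof -
  have "x \<in> A" using is_partition_subset[OF P ij(2)] x by blast
  then have "poly (lagrange_block A (B i)) x = (if x \<in> B i then 1 else 0)"
    by (rule poly_lagrange_block[OF fin ud is_partition_subset[OF P ij(1)]])
  then show ?thesis using is_partition_block_eq[OF P ij x] by simp
qed

lemma is_basis_F_algI:
  fixes A :: "'a::comm_ring_1 set" and fs :: "nat \<Rightarrow> 'a poly" and M :: "nat \<Rightarrow> nat \<Rightarrow> 'a"
  assumes fin: "finite A" and ud: "unit_differences A" and P: "is_partition A B l"
    and deg: "\<forall>k<l. deg_less (fs k) (card A)"
    and val: "\<forall>k<l. \<forall>i<l. \<forall>a\<in>B i. poly (fs k) a = M i k"
    and surj: "\<And>v. \<exists>d. \<forall>i<l. (\<Sum>k<l. d k * M i k) = v i"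
    and inj: "\<And>d. \<forall>i<l. (\<Sum>k<l. d k * M i k) = 0 \<Longrightarrow> \<forall>k<l. d k = 0"
  shows "is_basis (F_alg A B l) fs l"
proof -
  let ?comb = "\<lambda>d. \<Sum>k<l. smult (d k) (fs k)"
  have comb_val: "poly (?comb d) a = (\<Sum>k<l. d k * M i k)" if "i < l" "a \<in> B i" for d i a
    using val that by (simp add: poly_sum)
  have comb_deg: "deg_less (?comb d) (card A)" for d
    using deg by (intro deg_less_sum deg_less_smult) auto
  have span: "\<exists>d. f = ?comb d" if f: "f \<in> F_alg A B l" for f
  proof -
    obtain v where v: "\<forall>i<l. \<forall>a\<in>B i. poly f a = v i" using F_alg_block_values[OF f] .
    obtain d where d: "\<forall>i<l. (\<Sum>k<l. d k * M i k) = v i" using surj by blast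
    have "f = ?comb d"
    proof (rule poly_eqI_unit_differences[OF fin ud _ comb_deg])
      show "deg_less f (card A)" using f unfolding F_alg_def by blast
      show "\<forall>a\<in>A. poly f a = poly (?comb d) a"
      proof
        fix a assume "a \<in> A"
        then obtain i where "i < l" "a \<in> B i" using is_partition_cover[OF P] by blast
        then show "poly f a = poly (?comb d) a" using v d comb_val by simp
      qed
    qed
    then show ?thesis by blast
  qed
  have comb_F: "?comb d \<in> F_alg A B l" for d
    unfolding F_alg_def using comb_deg comb_val by auto
  have indep: "\<forall>k<l. d k = 0" if zero: "?comb d = 0" for d
  proof (rule inj, intro allI impI)
    fix i assume i: "i < l"
    then obtain a where a: "a \<in> B i" using is_partition_nonempty[OF P] by blast
    show "(\<Sum>k<l. d k * M i k) = 0" using comb_val[OF i a, of d] zero by simp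
  qed
  have "F_alg A B l = {?comb d | d. True}"
    using span comb_F by (intro equalityI subsetI) auto
  with indep show ?thesis unfolding is_basis_def by blast
qed

lemma degree_bounds_F_alg:
  fixes A :: "'a::comm_ring_1 set"
  assumes fin: "finite A" and ud: "unit_differences A" and P: "is_partition A B l"
    and f: "f \<in> F_alg A B l" and d: "0 < degree f"
  shows "Max {card (B i) | i. i < l} \<le> degree f" and "degree f < card A"
proof -
  have "deg_less f (card A)" using f unfolding F_alg_def by blast
  then show "degree f < card A" using d unfolding deg_less_def by auto
  then have "A \<noteq> {}" by auto
  then have "l \<noteq> 0" using P unfolding is_partition_def by auto
  have "card (B i) \<le> degree f" if i: "i < l" for i
  proof -
    obtain a where a: "a \<in> B i" using is_partition_nonempty[OF P i] by blast
    have sub: "B i \<subseteq> A" using is_partition_subset[OF P i] .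
    have finB: "finite (B i)" using finite_subset[OF sub fin] .
    have "poly f s = poly f a" if "s \<in> B i" for s
      using f i a that unfolding F_alg_def by blast
    then have "\<forall>s\<in>B i. poly (f - [:poly f a:]) s = 0" by simp
    then have "h_poly (B i) dvd f - [:poly f a:]"
      by (rule h_poly_dvd_if_roots[OF finB unit_differences_subset[OF ud sub]])
    then obtain q where q: "f - [:poly f a:] = h_poly (B i) * q" by (rule dvdE)
    have deg_diff: "degree (f - [:poly f a:]) = degree f"
      using d by (simp only: diff_conv_add_uminus, intro degree_add_eq_left) simp
    then have "q \<noteq> 0" using d q by auto
    then show ?thesis using q deg_diff finB by (simp add: degree_h_poly_mult)
  qed
  then have "Max ((\<lambda>i. card (B i)) ` {..<l}) \<le> degree f"
    using \<open>l \<noteq> 0\<close> by (subst Max_le_iff) auto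
  moreover have "{card (B i) | i. i < l} = (\<lambda>i. card (B i)) ` {..<l}" by auto
  ultimately show "Max {card (B i) | i. i < l} \<le> degree f" by simp
qed

lemma is_basis_lagrange_blocks:
  fixes A :: "'a::comm_ring_1 set"
  assumes fin: "finite A" and ud: "unit_differences A" and P: "is_partition A B l"
  shows "is_basis (F_alg A B l) (\<lambda>i. lagrange_block A (B i)) l"
proof (rule is_basis_F_algI[OF fin ud P, where M = "\<lambda>i k. if k = i then 1 else 0"])
  show "\<forall>k<l. deg_less (lagrange_block A (B k)) (card A)"
    using deg_less_lagrange_block[OF fin] is_partition_subset[OF P] by blast
  show "\<forall>k<l. \<forall>i<l. \<forall>a\<in>B i. poly (lagrange_block A (B k)) a = (if k = i then 1 else 0)"
    using poly_lagrange_block_partition[OF fin ud P] by blast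
qed (auto simp: if_distrib cong: if_cong)

lemma is_basis_powers_mod_h_poly:
  fixes A :: "'a::comm_ring_1 set" and c :: "nat \<Rightarrow> 'a"
  assumes fin: "finite A" and ud: "unit_differences A" and P: "is_partition A B l"
    and inj: "inj_on c {..<l}" and udc: "unit_differences (c ` {..<l})"
    and g: "\<forall>i<l. \<forall>a\<in>B i. poly g a = c i"
  shows "is_basis (F_alg A B l) (\<lambda>k. mod_monic (g ^ k) (h_poly A)) l"
proof (rule is_basis_F_algI[OF fin ud P, where M = "\<lambda>i k. c i ^ k"])
  show "\<forall>k<l. deg_less (mod_monic (g ^ k) (h_poly A)) (card A)"
    using mod_monic_h_poly(1)[OF fin ud] by blast
  show "\<forall>k<l. \<forall>i<l. \<forall>a\<in>B i. poly (mod_monic (g ^ k) (h_poly A)) a = c i ^ k"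
  proof (intro allI impI ballI)
    fix k i a assume "i < l" "a \<in> B i"
    then have "a \<in> A" "poly g a = c i" using is_partition_subset[OF P] g by auto
    then show "poly (mod_monic (g ^ k) (h_poly A)) a = c i ^ k"
      using mod_monic_h_poly(2)[OF fin ud] by (simp add: poly_power)
  qed
  show "\<exists>d. \<forall>i<l. (\<Sum>k<l. d k * c i ^ k) = v i" for v
    using vandermonde_solvable[OF inj udc] by blast
  show "\<forall>k<l. d k = 0" if "\<forall>i<l. (\<Sum>k<l. d k * c i ^ k) = 0" for d
    using vandermonde_kernel[OF inj udc that] by blast
qed

theorem mainTheorem10:
  fixes A :: "'a::comm_ring_1 set" and B :: "nat \<Rightarrow> 'a set" and l :: nat
  assumes R: "finite_chain_ring TYPE('a)"
    and wc: "well_conditioned A"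
    and part: "is_partition A B l"
  shows
    "(\<forall>f\<in>F_alg A B l. 0 < degree f \<longrightarrow>
         Max {card (B i) | i. i < l} \<le> degree f \<and> degree f < card A)
     \<and> is_basis (F_alg A B l) (\<lambda>i. lagrange_block A (B i)) l
     \<and> (\<forall>i<l. \<forall>j<l. \<forall>a\<in>B j. poly (lagrange_block A (B i)) a = (if i = j then 1 else 0))
     \<and> (\<forall>(c :: nat \<Rightarrow> 'a) g. inj_on c {..<l} \<and> well_conditioned (c ` {..<l}) \<and>
          deg_less g (card A) \<and> (\<forall>i<l. \<forall>a\<in>B i. poly g a = c i) \<longrightarrow>
          is_basis (F_alg A B l) (\<lambda>k. mod_monic (g ^ k) (h_poly A)) l)"
proof -
  have L: "local_ring TYPE('a)" and finite_R: "finite (UNIV :: 'a set)"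
    using R unfolding finite_chain_ring_def by blast+
  have fin: "finite A" using finite_R by (rule finite_subset[OF subset_UNIV])
  have ud: "unit_differences A" using well_conditioned_unit_differences[OF L wc] .
  show ?thesis
  proof (intro conjI ballI impI allI)
    fix f assume f: "f \<in> F_alg A B l" and d: "0 < degree f"
    show "Max {card (B i) | i. i < l} \<le> degree f" and "degree f < card A"
      using degree_bounds_F_alg[OF fin ud part f d] by simp_all
  next
    fix c :: "nat \<Rightarrow> 'a" and g
    assume "inj_on c {..<l} \<and> well_conditioned (c ` {..<l}) \<and>
      deg_less g (card A) \<and> (\<forall>i<l. \<forall>a\<in>B i. poly g a = c i)"
    then have "inj_on c {..<l}" "unit_differences (c ` {..<l})" "\<forall>i<l. \<forall>a\<in>B i. poly g a = c i"
      using well_conditioned_unit_differences[OF L] by simp_all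
    then show "is_basis (F_alg A B l) (\<lambda>k. mod_monic (g ^ k) (h_poly A)) l"
      by (rule is_basis_powers_mod_h_poly[OF fin ud part])
  next
    show "is_basis (F_alg A B l) (\<lambda>i. lagrange_block A (B i)) l"
      by (rule is_basis_lagrange_blocks[OF fin ud part])
  next
    fix i j a assume "i < l" "j < l" "a \<in> B j"
    then show "poly (lagrange_block A (B i)) a = (if i = j then 1 else 0)"
      by (rule poly_lagrange_block_partition[OF fin ud part])
  qed
qed

end
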